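(* Let $G=(V,E)$ be any $n$-vertex $d$-regular graph with girth at least $g$. For any map $\psi:V\to V$ with $\mathrm{rad}_G(\psi)<g/2-1$, we have $$\Pr_{v\in V}\left[|\psi(N_G(v))|<d-\sqrt{d}\right]<\frac{1}{\sqrt{d}},$$ where $v$ is chosen uniformly at random from $V$.
   Context: $G$ is an undirected unweighted graph; $d_G$ denotes its shortest-path metric and $N_G(v)$ the set of neighbors of $v$. The girth of $G$ is the length of its shortest cycle. For $\psi:V\to V$, $\mathrm{rad}_G(\psi)=\max_{v\in V}d_G(v,\psi(v))$. *)

theory Defs
  imports Complex_Main "HOL-Library.Extended_Nat"
begin

definition sgraph :: "'a set \<Rightarrow> ('a \<Rightarrow> 'a \<Rightarrow> bool) \<Rightarrow> bool" where
  "sgraph V E \<longleftrightarrow> finite V \<and> (\<forall>u v. E u v \<longrightarrow> u \<in> V \<and> v \<in> V)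
     \<and> (\<forall>u v. E u v \<longrightarrow> E v u) \<and> (\<forall>v. \<not> E v v)"

definition neighbors :: "('a \<Rightarrow> 'a \<Rightarrow> bool) \<Rightarrow> 'a \<Rightarrow> 'a set" where
  "neighbors E v = {u. E v u}"

definition regular :: "'a set \<Rightarrow> ('a \<Rightarrow> 'a \<Rightarrow> bool) \<Rightarrow> nat \<Rightarrow> bool" where
  "regular V E d \<longleftrightarrow> (\<forall>v\<in>V. card (neighbors E v) = d)"

text \<open>A walk is a nonempty vertex list with consecutive vertices adjacent; its length is length xs - 1.\<close>
definition walk :: "('a \<Rightarrow> 'a \<Rightarrow> bool) \<Rightarrow> 'a list \<Rightarrow> bool" where
  "walk E xs \<longleftrightarrow> xs \<noteq> [] \<and> (\<forall>i. Suc i < length xs \<longrightarrow> E (xs ! i) (xs ! Suc i))"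

definition gdist :: "('a \<Rightarrow> 'a \<Rightarrow> bool) \<Rightarrow> 'a \<Rightarrow> 'a \<Rightarrow> enat" where
  "gdist E u v = (if \<exists>xs. walk E xs \<and> hd xs = u \<and> last xs = v
     then enat (LEAST k. \<exists>xs. walk E xs \<and> hd xs = u \<and> last xs = v \<and> length xs = Suc k)
     else \<infinity>)"

definition is_cycle :: "('a \<Rightarrow> 'a \<Rightarrow> bool) \<Rightarrow> 'a list \<Rightarrow> bool" where
  "is_cycle E xs \<longleftrightarrow> length xs \<ge> 3 \<and> distinct xs \<and>
     (\<forall>i < length xs. E (xs ! i) (xs ! ((i + 1) mod length xs)))"

definition girth_ge :: "'a set \<Rightarrow> ('a \<Rightarrow> 'a \<Rightarrow> bool) \<Rightarrow> nat \<Rightarrow> bool" where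
  "girth_ge V E g \<longleftrightarrow> (\<forall>xs. set xs \<subseteq> V \<and> is_cycle E xs \<longrightarrow> length xs \<ge> g)"

definition rad :: "'a set \<Rightarrow> ('a \<Rightarrow> 'a \<Rightarrow> bool) \<Rightarrow> ('a \<Rightarrow> 'a) \<Rightarrow> enat" where
  "rad V E \<psi> = (SUP v\<in>V. gdist E v (\<psi> v))"

end

theory Submission
  imports Defs
begin

(* Fix a vertex a and put x = \<psi> a, so d(x, a) \<le> r with 2 r + 2 < g. Within distance r + 1 of x
   the graph looks like a tree rooted at x: two shortest paths from x together with one more
   edge would close a cycle of length at most 2 r + 2 < g. Hence adjacent vertices there have
   distances to x differing by exactly one, and every vertex has at most one neighbour closer
   to x. Call a a child of v if v is the neighbour of a closer to \<psi> a. Every vertex is a child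
   of at most one v, so the numbers of children sum to at most n. Two neighbours of v that are
   not children of v and have the same image x would both be neighbours of v closer to x, so \<psi>
   is injective on them and |\<psi>(N v)| \<ge> d - #children(v). A bad vertex therefore has more than
   sqrt d children, and Markov's inequality bounds their proportion by 1 / sqrt d. *)

lemma walk_iff_successively: "walk E xs \<longleftrightarrow> xs \<noteq> [] \<and> successively E xs"
  by (simp add: walk_def successively_conv_nth)

lemma successively_rev_symp: "symp E \<Longrightarrow> successively E (rev xs) \<longleftrightarrow> successively E xs"
proof -
  assume "symp E"
  then have "(\<lambda>x y. E y x) = E" by (intro ext) (metis sympD)
  then show ?thesis by (metis successively_rev)
qed

lemma is_cycleI:
  assumes "3 \<le> length ys" "distinct ys" "successively E ys" "E (last ys) (hd ys)"
  shows "is_cycle E ys"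
  unfolding is_cycle_def
proof (intro conjI allI impI assms(1,2))
  fix i assume i: "i < length ys"
  show "E (ys ! i) (ys ! ((i + 1) mod length ys))"
  proof (cases "Suc i < length ys")
    case True
    then show ?thesis using successively_nth[OF assms(3)] by simp
  next
    case False
    with i have "ys \<noteq> []" "i = length ys - 1" "Suc i = length ys" by auto
    then have "ys ! i = last ys" "(i + 1) mod length ys = 0" "ys ! 0 = hd ys"
      by (simp_all add: last_conv_nth hd_conv_nth)
    then show ?thesis using assms(4) by simp
  qed
qed

definition has_walk :: "('a \<Rightarrow> 'a \<Rightarrow> bool) \<Rightarrow> 'a \<Rightarrow> 'a \<Rightarrow> nat \<Rightarrow> bool" where
  "has_walk E x y k \<longleftrightarrow> (\<exists>xs. walk E xs \<and> hd xs = x \<and> last xs = y \<and> length xs = Suc k)"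

definition reachable :: "('a \<Rightarrow> 'a \<Rightarrow> bool) \<Rightarrow> 'a \<Rightarrow> 'a \<Rightarrow> bool" where
  "reachable E x y \<longleftrightarrow> (\<exists>k. has_walk E x y k)"

definition walk_dist :: "('a \<Rightarrow> 'a \<Rightarrow> bool) \<Rightarrow> 'a \<Rightarrow> 'a \<Rightarrow> nat" where
  "walk_dist E x y = (LEAST k. has_walk E x y k)"

lemma walk_dist_le: "has_walk E x y k \<Longrightarrow> walk_dist E x y \<le> k"
  unfolding walk_dist_def by (rule Least_le)

lemma has_walk_walk_dist: "reachable E x y \<Longrightarrow> has_walk E x y (walk_dist E x y)"
  unfolding reachable_def walk_dist_def by (rule LeastI_ex)

lemma gdist_eq: "gdist E x y = (if reachable E x y then enat (walk_dist E x y) else \<infinity>)"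
proof -
  have "(\<exists>xs. walk E xs \<and> hd xs = x \<and> last xs = y) \<longleftrightarrow> reachable E x y"
    unfolding reachable_def has_walk_def walk_def by (metis Suc_pred length_greater_0_conv)
  then show ?thesis
    unfolding gdist_def walk_dist_def has_walk_def by simp
qed

lemma gdist_le_enat_iff: "gdist E x y \<le> enat r \<longleftrightarrow> reachable E x y \<and> walk_dist E x y \<le> r"
  by (simp add: gdist_eq)

lemma has_walk_snoc:
  assumes "has_walk E x y k" "E y z"
  shows "has_walk E x z (Suc k)"
proof -
  obtain xs where "walk E xs" "hd xs = x" "last xs = y" "length xs = Suc k"
    using assms(1) unfolding has_walk_def by blast
  then show ?thesis
    unfolding has_walk_def walk_iff_successively using assms(2)
    by (intro exI[of _ "xs @ [z]"]) (auto simp: successively_append_iff hd_append)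
qed

lemma reachable_snoc:
  "reachable E x y \<Longrightarrow> E y z \<Longrightarrow> reachable E x z \<and> walk_dist E x z \<le> Suc (walk_dist E x y)"
  by (meson has_walk_snoc has_walk_walk_dist reachable_def walk_dist_le)

lemma has_walk_commute:
  assumes "symp E"
  shows "has_walk E x y = has_walk E y x"
proof -
  have rev: "has_walk E y x k" if xy: "has_walk E x y k" for x y k
  proof -
    obtain xs where xs: "walk E xs" "hd xs = x" "last xs = y" "length xs = Suc k"
      using xy unfolding has_walk_def by blast
    have "walk E (rev xs)"
      using xs(1) assms
      by (simp add: walk_iff_successively successively_rev_symp del: successively_rev)
    then show ?thesis
      unfolding has_walk_def using xs by (intro exI[of _ "rev xs"]) (auto simp: hd_rev last_rev)
  qed
  show ?thesis using rev by (intro ext iffI)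
qed

lemma reachable_commute: "symp E \<Longrightarrow> reachable E x y \<longleftrightarrow> reachable E y x"
  unfolding reachable_def by (simp add: has_walk_commute[of E x y])

lemma walk_dist_commute: "symp E \<Longrightarrow> walk_dist E x y = walk_dist E y x"
  unfolding walk_dist_def by (simp add: has_walk_commute[of E x y])

lemma walk_dist_nth_le: "walk E xs \<Longrightarrow> i < length xs \<Longrightarrow> walk_dist E (hd xs) (xs ! i) \<le> i"
proof -
  assume "walk E xs" "i < length xs"
  then have "walk E (take (Suc i) xs)"
    using successively_append_iff[of E "take (Suc i) xs" "drop (Suc i) xs"]
    unfolding walk_iff_successively by auto
  then have "has_walk E (hd xs) (xs ! i) i"
    unfolding has_walk_def using \<open>i < length xs\<close> hd_take[of "Suc i" xs]
    by (intro exI[of _ "take (Suc i) xs"]) (simp add: take_Suc_conv_app_nth)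
  then show ?thesis by (rule walk_dist_le)
qed

lemma shortest_walk_distinct:
  assumes "walk E xs" "length xs = Suc (walk_dist E (hd xs) (last xs))"
  shows "distinct xs"
proof (rule ccontr)
  assume "\<not> distinct xs"
  then obtain us y vs ws where xs: "xs = us @ [y] @ vs @ [y] @ ws"
    using not_distinct_decomp by blast
  let ?ys = "us @ y # ws"
  have "walk E ?ys"
    using assms(1) successively_append_iff[of E "us @ y # vs" "y # ws"]
    unfolding xs walk_iff_successively by (auto simp: successively_append_iff)
  moreover have "hd ?ys = hd xs" "last ?ys = last xs"
    unfolding xs by (simp_all add: hd_append)
  ultimately have "has_walk E (hd xs) (last xs) (length ?ys - 1)"
    unfolding has_walk_def by (intro exI[of _ ?ys]) simp
  then have "walk_dist E (hd xs) (last xs) \<le> length ?ys - 1" by (rule walk_dist_le)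
  then show False using assms(2) unfolding xs by simp
qed

lemma shortest_walkE:
  assumes "reachable E x y"
  obtains xs where "walk E xs" "hd xs = x" "last xs = y" "length xs = Suc (walk_dist E x y)"
    "distinct xs" "\<And>z. z \<in> set xs \<Longrightarrow> z \<noteq> y \<Longrightarrow> walk_dist E x z < walk_dist E x y"
proof -
  obtain xs where xs: "walk E xs" "hd xs = x" "last xs = y" "length xs = Suc (walk_dist E x y)"
    using has_walk_walk_dist[OF assms] unfolding has_walk_def by blast
  have "walk_dist E x z < walk_dist E x y" if "z \<in> set xs" "z \<noteq> y" for z
  proof -
    obtain i where i: "i < length xs" "z = xs ! i"
      using \<open>z \<in> set xs\<close> by (auto simp: in_set_conv_nth)
    have "i \<noteq> walk_dist E x y"
      using i xs(1,3,4) \<open>z \<noteq> y\<close> by (auto simp: last_conv_nth walk_def)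
    then show ?thesis using walk_dist_nth_le[OF xs(1) i(1)] i xs(2,4) by simp
  qed
  moreover have "distinct xs" using shortest_walk_distinct[OF xs(1)] xs by simp
  ultimately show thesis using that xs by blast
qed

locale girth_graph =
  fixes V :: "'a set" and E :: "'a \<Rightarrow> 'a \<Rightarrow> bool" and g :: nat
  assumes sgraph: "sgraph V E" and girth: "girth_ge V E g"
begin

lemma symp_E: "symp E"
  using sgraph unfolding sgraph_def symp_def by blast

lemma edge_sym: "E u v \<Longrightarrow> E v u"
  using symp_E by (rule sympD)

lemma finite_V: "finite V"
  using sgraph by (simp add: sgraph_def)

lemma edge_irrefl: "\<not> E v v"
  using sgraph unfolding sgraph_def by blast

lemma edge_in_V:
  assumes "E u v"
  shows "u \<in> V" "v \<in> V"
  using sgraph assms unfolding sgraph_def by blast+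

lemma in_neighbors_iff: "a \<in> neighbors E v \<longleftrightarrow> E a v"
  unfolding neighbors_def by (metis mem_Collect_eq edge_sym)

lemma neighbors_subset: "neighbors E v \<subseteq> V"
  using edge_in_V(1) in_neighbors_iff by blast

lemma girth_le_cycle: "is_cycle E ys \<Longrightarrow> g \<le> length ys"
proof -
  assume cyc: "is_cycle E ys"
  have "set ys \<subseteq> V"
  proof
    fix u assume "u \<in> set ys"
    then obtain i where "i < length ys" "ys ! i = u" by (auto simp: in_set_conv_nth)
    then show "u \<in> V" using cyc edge_in_V(1) unfolding is_cycle_def by blast
  qed
  then show ?thesis using girth cyc unfolding girth_ge_def by blast
qed

lemma girth_lt_paths:
  assumes P: "walk E P" "distinct P" and Q: "walk E Q" "distinct Q"
    and "hd P = hd Q" "E (last P) (last Q)" "last P \<notin> set Q" "last Q \<notin> set P"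
  shows "g < length P + length Q"
proof -
  have "P \<noteq> []" "Q \<noteq> []" using P(1) Q(1) by (simp_all add: walk_def)
  then have "\<exists>z\<in>set P. z \<in> set Q" using \<open>hd P = hd Q\<close> hd_in_set by metis
  then obtain P1 y P2 where P_split: "P = P1 @ y # P2" "y \<in> set Q" "\<forall>z\<in>set P2. z \<notin> set Q"
    using split_list_last_prop[of P "\<lambda>z. z \<in> set Q"] by blast
  obtain Q1 Q2 where Q_split: "Q = Q1 @ y # Q2" using split_list[OF \<open>y \<in> set Q\<close>] by blast
  \<comment> \<open>y is the last vertex of P on Q; the cycle runs from y along P, across the edge
      between the endpoints, and back along Q to y.\<close>
  have "P2 \<noteq> []" using P_split \<open>last P \<notin> set Q\<close> by auto
  have "Q2 \<noteq> []" using Q_split P_split \<open>last Q \<notin> set P\<close> by auto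
  define C where "C = y # P2 @ rev Q2"
  have walk_P2: "successively E (y # P2)" and walk_Q2: "successively E (y # Q2)"
    using P(1) Q(1) P_split(1) Q_split
    by (auto simp: walk_iff_successively successively_append_iff)
  have "successively E (rev Q2)"
    using walk_Q2
    by (auto simp: successively_rev_symp[OF symp_E] successively_Cons simp del: successively_rev)
  have "is_cycle E C"
  proof (rule is_cycleI)
    show "3 \<le> length C" using \<open>P2 \<noteq> []\<close> \<open>Q2 \<noteq> []\<close> unfolding C_def
      by (cases P2; cases Q2) auto
    show "distinct C"
      using P(2) Q(2) P_split Q_split unfolding C_def by auto
    have "E (last (y # P2)) (hd (rev Q2))"
      using \<open>E (last P) (last Q)\<close> P_split(1) Q_split \<open>P2 \<noteq> []\<close> \<open>Q2 \<noteq> []\<close>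
      by (simp add: hd_rev)
    then have "successively E ((y # P2) @ rev Q2)"
      using walk_P2 \<open>successively E (rev Q2)\<close>
      unfolding successively_append_iff by blast
    then show "successively E C" unfolding C_def by simp
    show "E (last C) (hd C)"
    proof -
      have "E y (hd Q2)" using walk_Q2 \<open>Q2 \<noteq> []\<close> by (cases Q2) simp_all
      then have "E (hd Q2) y" by (rule edge_sym)
      then show ?thesis using \<open>Q2 \<noteq> []\<close> unfolding C_def by (simp add: last_rev)
    qed
  qed
  then have "g \<le> length C" by (rule girth_le_cycle)
  then show ?thesis using P_split(1) Q_split unfolding C_def by simp
qed

lemma walk_dist_edge_neq:
  assumes "reachable E x p" "reachable E x q" "E p q" "2 * walk_dist E x p + 1 < g"
  shows "walk_dist E x p \<noteq> walk_dist E x q"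
proof
  assume level: "walk_dist E x p = walk_dist E x q"
  obtain P where P: "walk E P" "hd P = x" "last P = p" "length P = Suc (walk_dist E x p)"
    "distinct P" "\<And>z. z \<in> set P \<Longrightarrow> z \<noteq> p \<Longrightarrow> walk_dist E x z < walk_dist E x p"
    using shortest_walkE[OF assms(1)] by blast
  obtain Q where Q: "walk E Q" "hd Q = x" "last Q = q" "length Q = Suc (walk_dist E x q)"
    "distinct Q" "\<And>z. z \<in> set Q \<Longrightarrow> z \<noteq> q \<Longrightarrow> walk_dist E x z < walk_dist E x q"
    using shortest_walkE[OF assms(2)] by blast
  have "p \<noteq> q" using \<open>E p q\<close> edge_irrefl by blast
  then have "p \<notin> set Q" "q \<notin> set P" using P(6) Q(6) level by force+
  then have "g < length P + length Q"
    using girth_lt_paths[OF P(1,5) Q(1,5)] P(2,3) Q(2,3) \<open>E p q\<close> by simp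
  then show False using assms(4) P(4) Q(4) level by simp
qed

lemma walk_dist_edge_cases:
  assumes "reachable E x a" "E a v" "2 * walk_dist E x a + 1 < g"
  shows "walk_dist E x v = Suc (walk_dist E x a) \<or> Suc (walk_dist E x v) = walk_dist E x a"
proof -
  have v: "reachable E x v" "walk_dist E x v \<le> Suc (walk_dist E x a)"
    using reachable_snoc[OF assms(1,2)] by simp_all
  have "walk_dist E x a \<le> Suc (walk_dist E x v)"
    using reachable_snoc[OF v(1) edge_sym[OF assms(2)]] by simp
  moreover have "walk_dist E x a \<noteq> walk_dist E x v"
    using walk_dist_edge_neq[OF assms(1) v(1) assms(2,3)] .
  ultimately show ?thesis using v(2) by linarith
qed

lemma lower_neighbour_unique:
  assumes "reachable E x p" "reachable E x q" "E p w" "E q w"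
    and "walk_dist E x w = Suc (walk_dist E x p)" "walk_dist E x w = Suc (walk_dist E x q)"
    and "2 * walk_dist E x w < g"
  shows "p = q"
proof (rule ccontr)
  assume "p \<noteq> q"
  obtain P where P: "walk E P" "hd P = x" "last P = p" "length P = Suc (walk_dist E x p)"
    "distinct P" "\<And>z. z \<in> set P \<Longrightarrow> z \<noteq> p \<Longrightarrow> walk_dist E x z < walk_dist E x p"
    using shortest_walkE[OF assms(1)] by blast
  obtain Q where Q: "walk E Q" "hd Q = x" "last Q = q" "length Q = Suc (walk_dist E x q)"
    "distinct Q" "\<And>z. z \<in> set Q \<Longrightarrow> z \<noteq> q \<Longrightarrow> walk_dist E x z < walk_dist E x q"
    using shortest_walkE[OF assms(2)] by blast
  have "w \<notin> set Q" "w \<notin> set P" using P(6) Q(6) assms(5,6) by force+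
  have walk_Qw: "walk E (Q @ [w])" and "hd (Q @ [w]) = x"
    using Q(1-3) \<open>E q w\<close> by (auto simp: walk_iff_successively successively_append_iff)
  have "p \<noteq> w" using \<open>E p w\<close> edge_irrefl by blast
  then have "p \<notin> set (Q @ [w])" using Q(6) \<open>p \<noteq> q\<close> assms(5,6) by force
  then have "g < length P + length (Q @ [w])"
    using girth_lt_paths[OF P(1,5) walk_Qw] P(2,3) Q(5) \<open>hd (Q @ [w]) = x\<close>
      \<open>w \<notin> set Q\<close> \<open>w \<notin> set P\<close> \<open>E p w\<close> by simp
  then show False using assms(5-7) P(4) Q(4) by simp
qed

end

locale short_radius_map = girth_graph +
  fixes \<psi> :: "'a \<Rightarrow> 'a" and r :: nat
  assumes displacement: "a \<in> V \<Longrightarrow> reachable E (\<psi> a) a \<and> walk_dist E (\<psi> a) a \<le> r"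
    and radius: "2 * r + 2 < g"
begin

definition children :: "'a \<Rightarrow> 'a set" where
  "children v = {a \<in> neighbors E v. walk_dist E (\<psi> a) a = Suc (walk_dist E (\<psi> a) v)}"

lemma children_disjoint:
  assumes "v \<noteq> v'"
  shows "children v \<inter> children v' = {}"
proof (rule equals0I)
  fix a assume "a \<in> children v \<inter> children v'"
  then have edges: "E v a" "E v' a" and "a \<in> V"
    and levels: "walk_dist E (\<psi> a) a = Suc (walk_dist E (\<psi> a) v)"
      "walk_dist E (\<psi> a) a = Suc (walk_dist E (\<psi> a) v')"
    using edge_in_V(2) unfolding children_def neighbors_def by auto
  have a: "reachable E (\<psi> a) a" "walk_dist E (\<psi> a) a \<le> r"
    using displacement[OF \<open>a \<in> V\<close>] by simp_all
  have "reachable E (\<psi> a) v" "reachable E (\<psi> a) v'"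
    using reachable_snoc[OF a(1) edge_sym] edges by simp_all
  moreover have "2 * walk_dist E (\<psi> a) a < g" using a(2) radius by linarith
  ultimately show False using lower_neighbour_unique edges levels assms by blast
qed

lemma inj_on_neighbors_Diff_children: "inj_on \<psi> (neighbors E v - children v)"
proof
  have level: "reachable E (\<psi> a) a \<and> walk_dist E (\<psi> a) v = Suc (walk_dist E (\<psi> a) a)
      \<and> 2 * walk_dist E (\<psi> a) v < g"
    if "a \<in> neighbors E v - children v" for a
  proof -
    have "E a v" using that in_neighbors_iff by blast
    have a: "reachable E (\<psi> a) a" "walk_dist E (\<psi> a) a \<le> r"
      using displacement[OF edge_in_V(1)[OF \<open>E a v\<close>]] by simp_all
    moreover have "Suc (walk_dist E (\<psi> a) v) \<noteq> walk_dist E (\<psi> a) a"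
      using that unfolding children_def by auto
    moreover have "2 * walk_dist E (\<psi> a) a + 1 < g" using a(2) radius by linarith
    ultimately show ?thesis
      using walk_dist_edge_cases[OF a(1) \<open>E a v\<close>] radius by auto
  qed
  fix a b
  assume a: "a \<in> neighbors E v - children v" and b: "b \<in> neighbors E v - children v"
    and "\<psi> a = \<psi> b"
  then have "E a v" "E b v" using in_neighbors_iff by blast+
  then show "a = b"
    using lower_neighbour_unique[of "\<psi> a" a b v] level[OF a] level[OF b] \<open>\<psi> a = \<psi> b\<close> by simp
qed

lemma card_image_neighbors_ge:
  "real (card (neighbors E v)) - real (card (children v)) \<le> real (card (\<psi> ` neighbors E v))"
proof -
  have fin: "finite (neighbors E v)"
    using finite_V neighbors_subset by (rule finite_subset[rotated])
  have "card (neighbors E v) - card (children v) \<le> card (neighbors E v - children v)"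
    by (rule diff_card_le_card_Diff) (use fin in \<open>simp add: children_def\<close>)
  also have "\<dots> = card (\<psi> ` (neighbors E v - children v))"
    using card_image[OF inj_on_neighbors_Diff_children] by simp
  also have "\<dots> \<le> card (\<psi> ` neighbors E v)"
    using fin by (intro card_mono) auto
  finally show ?thesis by linarith
qed

lemma sum_card_children_le: "(\<Sum>v\<in>V. card (children v)) \<le> card V"
proof -
  have sub: "children v \<subseteq> V" for v
    using neighbors_subset unfolding children_def by blast
  have "card (\<Union>v\<in>V. children v) = (\<Sum>v\<in>V. card (children v))"
    using finite_V finite_subset[OF sub finite_V] children_disjoint by (intro card_UN_disjoint) auto
  moreover have "card (\<Union>v\<in>V. children v) \<le> card V"
    using finite_V sub by (intro card_mono) auto
  ultimately show ?thesis by simp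
qed

end

lemma Markov_card_ratio_less:
  fixes f :: "'a \<Rightarrow> real"
  assumes "finite V" "V \<noteq> {}" "B \<subseteq> V" "t > 0"
    and "\<And>v. v \<in> V \<Longrightarrow> 0 \<le> f v" "\<And>v. v \<in> B \<Longrightarrow> t < f v"
    and "(\<Sum>v\<in>V. f v) \<le> card V"
  shows "card B / card V < 1 / t"
proof -
  have "card V > 0" using assms(1,2) by (simp add: card_gt_0_iff)
  have "card B * t < card V"
  proof (cases "B = {}")
    case True
    then show ?thesis using \<open>card V > 0\<close> by simp
  next
    case False
    have "finite B" using assms(1,3) finite_subset by blast
    then have "card B * t < (\<Sum>v\<in>B. f v)"
      using sum_strict_mono[of B "\<lambda>_. t" f] False assms(6) by simp
    also have "\<dots> \<le> (\<Sum>v\<in>V. f v)"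
      using assms(1,3,5) by (intro sum_mono2) auto
    finally show ?thesis using assms(7) by simp
  qed
  then show ?thesis using \<open>card V > 0\<close> assms(4) by (simp add: field_simps)
qed

theorem lemma1:
  fixes V :: "'a set" and E :: "'a \<Rightarrow> 'a \<Rightarrow> bool" and d g :: nat and \<psi> :: "'a \<Rightarrow> 'a"
  assumes "sgraph V E" and "V \<noteq> {}" and "d \<ge> 1"
    and "regular V E d" and "girth_ge V E g"
    and "\<psi> ` V \<subseteq> V"
    and "\<exists>r::nat. rad V E \<psi> = enat r \<and> real r < real g / 2 - 1"
  shows "real (card {v \<in> V. real (card (\<psi> ` neighbors E v)) < real d - sqrt (real d)})
           / real (card V) < 1 / sqrt (real d)"
proof -
  interpret girth_graph V E g using assms(1,5) by unfold_locales
  obtain r where r: "rad V E \<psi> = enat r" "real r < real g / 2 - 1" using assms(7) by blast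
  interpret short_radius_map V E g \<psi> r
  proof
    fix a assume "a \<in> V"
    then have "gdist E a (\<psi> a) \<le> enat r" using r(1) unfolding rad_def by (metis SUP_upper)
    then show "reachable E (\<psi> a) a \<and> walk_dist E (\<psi> a) a \<le> r"
      by (simp add: gdist_le_enat_iff reachable_commute[OF symp_E] walk_dist_commute[OF symp_E])
  next
    show "2 * r + 2 < g" using r(2) by linarith
  qed
  show ?thesis
  proof (rule Markov_card_ratio_less[OF finite_V assms(2)])
    show "0 < sqrt (real d)" using assms(3) by simp
    show "(\<Sum>v\<in>V. real (card (children v))) \<le> real (card V)"
      using sum_card_children_le by (simp flip: of_nat_sum)
    fix v assume "v \<in> {v \<in> V. real (card (\<psi> ` neighbors E v)) < real d - sqrt (real d)}"
    then show "sqrt (real d) < real (card (children v))"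
      using card_image_neighbors_ge[of v] assms(4) unfolding regular_def by auto
  qed auto
qed

end
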